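(* Let $F$, $H$, $X$, $\Omega$, $Q$ and the sequences generated by the IneIREG method be as described in the context, and suppose $H$ is $\mu$-strongly monotone for some $\mu>0$. Suppose $0<\lambda_k<1/L_k$ for all $k\ge0$, where $L_k:=L_F+\eta_kL_H$; and $\alpha_0\in[0,1]$ and $\alpha_{k+1}\le(1-\beta_k)\alpha_k$ for all $k\ge0$, where $\beta_k:=\big(\frac{1}{1-\lambda_k^2L_k^2}+\frac{1}{2\lambda_k\eta_k\mu}\big)^{-1}$. Define $p_{-1}:=1$, $p_k:=\big(\prod_{i=0}^k(1-\beta_i)\big)^{-1}$ for $k\ge0$, and for $k\ge1$, $\Lambda_k:=\sum_{j=0}^{k-1}\lambda_j\eta_jp_j$, $\overline y_k:=\Lambda_k^{-1}\sum_{j=0}^{k-1}\lambda_j\eta_jp_jy_j$. Then for all $k\ge1$, $$-B_H\,\mathrm{dist}(\overline y_k,Q)\le\mathrm{Gap}(\overline y_k,H,Q)\le\frac{1}{\Lambda_k}\Big(\frac{D_X^2+\sum_{j=0}^{k-1}p_{j-1}\delta_j}{2}\Big).$$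
   Context: Work in $\mathbb{R}^n$ with Euclidean inner product $\langle\cdot,\cdot\rangle$ and norm $\|\cdot\|$. The maps $F\colon \mathrm{Dom}\,F\to\mathbb{R}^n$ and $H\colon\mathrm{Dom}\,H\to\mathbb{R}^n$ are monotone and Lipschitz continuous with constants $L_F>0$ and $L_H>0$; $H$ is $\mu$-strongly monotone means $\langle H(x)-H(y),x-y\rangle\ge\mu\|x-y\|^2$ for all $x,y\in\mathrm{Dom}\,H$. $X$ is a nonempty compact convex set and $\Omega$ a nonempty closed convex set with $X\subset\Omega\subset\mathrm{Dom}\,F\cap\mathrm{Dom}\,H$; $P_X,P_\Omega$ denote orthogonal projections. $Q:=\{x\in X:\langle F(x),y-x\rangle\ge0\ \forall y\in X\}$ is assumed nonempty. $D_X:=\sup_{x,y\in X}\|x-y\|$, $B_H:=\sup_{x\in Q}\|H(x)\|$, $\mathrm{dist}(y,Q)$ is the Euclidean distance to $Q$. $\mathrm{Gap}(z,H,Q):=\sup_{x\in Q}\langle H(x),z-x\rangle$. IneIREG method: start with $x_0=x_{-1}\in X$; for $k=0,1,\dots$, with parameters $\alpha_k\ge0$, $\lambda_k>0$, $\eta_k>0$, set $w_k=x_k+\alpha_k(x_k-x_{k-1})$, $w'_k=P_\Omega(w_k)$, $y_k=P_X\big(w_k-\lambda_k(F(w'_k)+\eta_kH(w'_k))\big)$, $x_{k+1}=P_X\big(w_k-\lambda_k(F(y_k)+\eta_kH(y_k))\big)$. Also $\delta_k:=\alpha_k(1+\alpha_k)\|x_k-x_{k-1}\|^2$ for $k\ge0$.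 *)

theory Defs
  imports "HOL-Analysis.Analysis"
begin

definition monotone_op :: "'a::real_inner set \<Rightarrow> ('a \<Rightarrow> 'a) \<Rightarrow> bool" where
  "monotone_op D F \<longleftrightarrow> (\<forall>x\<in>D. \<forall>y\<in>D. inner (F x - F y) (x - y) \<ge> 0)"

definition strongly_monotone_op :: "real \<Rightarrow> 'a::real_inner set \<Rightarrow> ('a \<Rightarrow> 'a) \<Rightarrow> bool" where
  "strongly_monotone_op \<mu> D H \<longleftrightarrow>
     (\<forall>x\<in>D. \<forall>y\<in>D. inner (H x - H y) (x - y) \<ge> \<mu> * (norm (x - y))\<^sup>2)"

definition VI_sol :: "('a::real_inner \<Rightarrow> 'a) \<Rightarrow> 'a set \<Rightarrow> 'a set" where
  "VI_sol F X = {x \<in> X. \<forall>y\<in>X. inner (F x) (y - x) \<ge> 0}"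

definition Gap :: "'a::real_inner \<Rightarrow> ('a \<Rightarrow> 'a) \<Rightarrow> 'a set \<Rightarrow> real" where
  "Gap z H Q = (SUP x\<in>Q. inner (H x) (z - x))"

definition ireg_beta :: "real \<Rightarrow> real \<Rightarrow> real \<Rightarrow> real \<Rightarrow> real \<Rightarrow> real" where
  "ireg_beta LF LH \<mu> lam eta =
     inverse (1 / (1 - lam\<^sup>2 * (LF + eta * LH)\<^sup>2) + 1 / (2 * lam * eta * \<mu>))"

end

theory Submission
  imports Defs
begin

text \<open>
  Fix a solution \<open>z \<in> Q\<close>. One extragradient step with the regularised operator
  \<open>F + \<eta>\<^sub>k H\<close>, started from the extrapolated point \<open>w\<^sub>k\<close>, contracts \<open>\<parallel>\<cdot> - z\<parallel>\<^sup>2\<close> by the factor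
  \<open>1 - \<beta>\<^sub>k\<close> up to the term \<open>-2 \<lambda>\<^sub>k \<eta>\<^sub>k \<langle>H z, y\<^sub>k - z\<rangle>\<close>: monotonicity of \<open>F\<close> at the solution \<open>z\<close>
  and strong monotonicity of \<open>H\<close> yield a term \<open>2 \<lambda>\<^sub>k \<eta>\<^sub>k \<mu> \<parallel>y\<^sub>k - z\<parallel>\<^sup>2\<close> which, together with the
  extragradient decrease \<open>(1 - \<lambda>\<^sub>k\<^sup>2 L\<^sub>k\<^sup>2) \<parallel>w\<^sub>k - y\<^sub>k\<parallel>\<^sup>2\<close>, dominates \<open>\<beta>\<^sub>k \<parallel>w\<^sub>k - z\<parallel>\<^sup>2\<close>
  (\<open>\<beta>\<^sub>k\<close> is half the harmonic mean of the two coefficients). After multiplying by \<open>p\<^sub>k\<close> the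
  inertial terms telescope, because \<open>p\<^sub>k \<alpha>\<^sub>k\<close> is nonincreasing, and summing gives
  \<open>\<Sum> \<lambda>\<^sub>j \<eta>\<^sub>j p\<^sub>j \<langle>H z, y\<^sub>j - z\<rangle> \<le> (D\<^sub>X\<^sup>2 + \<Sum> p\<^sub>j\<^sub>-\<^sub>1 \<delta>\<^sub>j) / 2\<close>; dividing by \<open>\<Lambda>\<^sub>k\<close> bounds
  \<open>\<langle>H z, y\<^sub>k - z\<rangle>\<close> at the weighted average, uniformly in \<open>z \<in> Q\<close>. The lower bound is
  Cauchy-Schwarz: \<open>\<langle>H z, v - z\<rangle> \<ge> -B\<^sub>H \<parallel>v - z\<parallel>\<close>.
\<close>

lemma extragradient_projection_step:
  fixes G :: "'a::euclidean_space \<Rightarrow> 'a"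
  assumes "convex X" "closed X" "z \<in> X"
    and y: "y = closest_point X (w - lam *\<^sub>R G w')"
    and x': "x' = closest_point X (w - lam *\<^sub>R G y)"
    and lip: "norm (G w' - G y) \<le> L * norm (w - y)" and "lam > 0"
  shows "(norm (x' - z))\<^sup>2 \<le> (norm (w - z))\<^sup>2 - (1 - lam\<^sup>2 * L\<^sup>2) * (norm (w - y))\<^sup>2
           + 2 * lam * inner (G y) (z - y)"
proof -
  have "x' \<in> X"
    unfolding x' using closest_point_in_set[OF \<open>closed X\<close>] \<open>z \<in> X\<close> by blast
  have proj_x': "inner (w - x') (z - x') \<le> lam * inner (G y) (z - x')"
    using closest_point_dot[OF assms(1-3), of "w - lam *\<^sub>R G y"] by (simp add: x' inner_diff_left)
  have proj_y: "inner (w - y) (x' - y) \<le> lam * inner (G w') (x' - y)"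
    using closest_point_dot[OF assms(1,2) \<open>x' \<in> X\<close>, of "w - lam *\<^sub>R G w'"]
    by (simp add: y [symmetric] inner_diff_left)
  have "inner (G w' - G y) (x' - y) \<le> L * norm (w - y) * norm (x' - y)"
    using norm_cauchy_schwarz[of "G w' - G y" "x' - y"] lip
    by (meson mult_right_mono norm_ge_zero order_trans)
  then have "2 * lam * inner (G w' - G y) (x' - y) \<le> 2 * lam * (L * norm (w - y) * norm (x' - y))"
    using \<open>lam > 0\<close> by simp
  also have "\<dots> \<le> lam\<^sup>2 * L\<^sup>2 * (norm (w - y))\<^sup>2 + (norm (x' - y))\<^sup>2"
    using sum_squares_bound[of "lam * L * norm (w - y)" "norm (x' - y)"]
    by (simp add: power2_eq_square algebra_simps)
  finally show ?thesis
    using proj_x' proj_y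
    by (simp add: power2_norm_eq_inner inner_diff_left inner_diff_right inner_commute algebra_simps)
qed

lemma harmonic_mean_square_le:
  fixes a b u v n :: real
  assumes "a > 0" "b > 0" "0 \<le> n" "n \<le> u + v"
  shows "inverse (1 / a + 1 / b) * n\<^sup>2 \<le> a * u\<^sup>2 + b * v\<^sup>2"
proof -
  have "inverse (1 / a + 1 / b) = a * b / (a + b)"
    using assms by (simp add: field_simps)
  moreover have "n\<^sup>2 \<le> (u + v)\<^sup>2"
    using assms by (simp add: power_mono)
  ultimately have "inverse (1 / a + 1 / b) * n\<^sup>2 \<le> a * b / (a + b) * (u + v)\<^sup>2"
    using assms by (metis mult_left_mono add_pos_pos divide_nonneg_pos less_imp_le mult_nonneg_nonneg)
  also have "\<dots> \<le> a * u\<^sup>2 + b * v\<^sup>2"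
  proof -
    have "a * b * (u + v)\<^sup>2 \<le> (a + b) * (a * u\<^sup>2 + b * v\<^sup>2)"
      using zero_le_power2[of "a * u - b * v"] by (simp add: power2_eq_square algebra_simps)
    then show ?thesis
      using assms by (simp add: divide_le_eq mult.commute)
  qed
  finally show ?thesis .
qed

lemma norm_extrapolation_diff_sq:
  fixes x x' z :: "'a::real_inner"
  shows "(norm (x + t *\<^sub>R (x - x') - z))\<^sup>2
           = (1 + t) * (norm (x - z))\<^sup>2 - t * (norm (x' - z))\<^sup>2 + t * (1 + t) * (norm (x - x'))\<^sup>2"
  by (simp add: power2_norm_eq_inner inner_diff_left inner_diff_right inner_add_left inner_add_right
      inner_commute algebra_simps)

lemma ireg_contraction_factor_pos:
  fixes lam eta LF LH :: real
  assumes "lam > 0" "eta \<ge> 0" "LF \<ge> 0" "LH \<ge> 0" "lam < 1 / (LF + eta * LH)"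
  shows "0 < 1 - lam\<^sup>2 * (LF + eta * LH)\<^sup>2"
proof -
  have L_nonneg: "0 \<le> LF + eta * LH"
    by (intro add_nonneg_nonneg mult_nonneg_nonneg assms(2-4))
  have "lam * (LF + eta * LH) < 1"
  proof (cases "LF + eta * LH = 0")
    case False
    with L_nonneg have "0 < LF + eta * LH"
      by linarith
    with assms(5) show ?thesis
      by (simp add: less_divide_eq)
  qed simp
  then show ?thesis
    using L_nonneg \<open>lam > 0\<close> by (simp add: power_mult_distrib [symmetric] power_less_one_iff)
qed

lemma ireg_beta_bounds:
  assumes "lam > 0" "eta > 0" "\<mu> > 0" "LF \<ge> 0" "LH \<ge> 0" "lam < 1 / (LF + eta * LH)"
  shows "0 < ireg_beta LF LH \<mu> lam eta" "ireg_beta LF LH \<mu> lam eta < 1"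
proof -
  have "1 \<le> 1 / (1 - lam\<^sup>2 * (LF + eta * LH)\<^sup>2)" "0 < 1 / (2 * lam * eta * \<mu>)"
    using ireg_contraction_factor_pos [of lam eta LF LH] assms by (simp_all add: le_divide_eq_1_pos)
  then have "1 < 1 / (1 - lam\<^sup>2 * (LF + eta * LH)\<^sup>2) + 1 / (2 * lam * eta * \<mu>)"
    by linarith
  then show "0 < ireg_beta LF LH \<mu> lam eta" "ireg_beta LF LH \<mu> lam eta < 1"
    unfolding ireg_beta_def by (auto simp: inverse_less_1_iff)
qed

lemma regularized_inner_VI_sol_le:
  assumes "monotone_op DF F" "strongly_monotone_op \<mu> DH H" "X \<subseteq> DF" "X \<subseteq> DH"
    and "z \<in> VI_sol F X" "y \<in> X" "eta \<ge> 0"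
  shows "inner (F y + eta *\<^sub>R H y) (z - y) \<le> - eta * (\<mu> * (norm (y - z))\<^sup>2 + inner (H z) (y - z))"
proof -
  have "z \<in> X" "inner (F z) (y - z) \<ge> 0"
    using assms(5,6) by (auto simp: VI_sol_def)
  moreover have "inner (F y - F z) (y - z) \<ge> 0"
    using assms(1,3,6) \<open>z \<in> X\<close> by (auto simp: monotone_op_def)
  ultimately have "inner (F y) (z - y) \<le> 0"
    by (simp add: inner_diff_left inner_diff_right inner_commute)
  moreover have "inner (H y - H z) (y - z) \<ge> \<mu> * (norm (y - z))\<^sup>2"
    using assms(2,4,6) \<open>z \<in> X\<close> by (auto simp: strongly_monotone_op_def)
  then have "inner (H y) (z - y) \<le> - (\<mu> * (norm (y - z))\<^sup>2 + inner (H z) (y - z))"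
    by (simp add: inner_diff_left inner_diff_right inner_commute)
  then have "eta * inner (H y) (z - y) \<le> eta * - (\<mu> * (norm (y - z))\<^sup>2 + inner (H z) (y - z))"
    using \<open>eta \<ge> 0\<close> by (rule mult_left_mono)
  ultimately show ?thesis
    by (simp add: inner_add_left algebra_simps)
qed

lemma ineireg_step_descent:
  fixes F H :: "'a::euclidean_space \<Rightarrow> 'a"
  assumes monF: "monotone_op DomF F" and lipF: "lipschitz_on LF DomF F"
    and smonH: "strongly_monotone_op \<mu> DomH H" and lipH: "lipschitz_on LH DomH H" and "\<mu> > 0"
    and X: "convex X" "closed X" and \<Omega>: "convex \<Omega>" "closed \<Omega>"
    and X_sub: "X \<subseteq> \<Omega>" and \<Omega>_sub: "\<Omega> \<subseteq> DomF \<inter> DomH"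
    and z: "z \<in> VI_sol F X"
    and lam: "lam > 0" and eta: "eta > 0" and lam_bd: "lam < 1 / (LF + eta * LH)"
    and w': "w' = closest_point \<Omega> w"
    and y: "y = closest_point X (w - lam *\<^sub>R (F w' + eta *\<^sub>R H w'))"
    and x': "x' = closest_point X (w - lam *\<^sub>R (F y + eta *\<^sub>R H y))"
  shows "(norm (x' - z))\<^sup>2
           \<le> (1 - ireg_beta LF LH \<mu> lam eta) * (norm (w - z))\<^sup>2 - 2 * lam * eta * inner (H z) (y - z)"
proof -
  define G where "G v = F v + eta *\<^sub>R H v" for v
  define L where "L = LF + eta * LH"
  have "z \<in> X"
    using z by (simp add: VI_sol_def)
  have "y \<in> X"
    unfolding y using closest_point_in_set [OF X(2)] \<open>z \<in> X\<close> by blast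
  have "w' \<in> \<Omega>"
    unfolding w' using closest_point_in_set [OF \<Omega>(2)] \<open>z \<in> X\<close> X_sub by blast
  have "y \<in> \<Omega>"
    using \<open>y \<in> X\<close> X_sub by blast
  have "lipschitz_on L \<Omega> G"
    unfolding G_def L_def using \<Omega>_sub \<open>eta > 0\<close>
    by (intro lipschitz_on_add lipschitz_on_cmult_nonneg lipschitz_on_subset [OF lipF]
        lipschitz_on_subset [OF lipH]) auto
  then have "norm (G w' - G y) \<le> L * norm (w' - y)"
    using \<open>y \<in> \<Omega>\<close> \<open>w' \<in> \<Omega>\<close> by (simp add: lipschitz_onD dist_norm [symmetric])
  also have "\<dots> \<le> L * norm (w - y)"
  proof (rule mult_left_mono)
    show "norm (w' - y) \<le> norm (w - y)"
      using closest_point_lipschitz [OF \<Omega>, of w y] \<open>y \<in> \<Omega>\<close>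
      by (auto simp: w' closest_point_self dist_norm)
    show "0 \<le> L"
      using \<open>lipschitz_on L \<Omega> G\<close> by (rule lipschitz_on_nonneg)
  qed
  finally have "(norm (x' - z))\<^sup>2 \<le> (norm (w - z))\<^sup>2 - (1 - lam\<^sup>2 * L\<^sup>2) * (norm (w - y))\<^sup>2
                  + 2 * lam * inner (G y) (z - y)"
    using extragradient_projection_step [OF X \<open>z \<in> X\<close>] y x' \<open>lam > 0\<close> by (simp add: G_def)
  moreover have "2 * lam * inner (G y) (z - y)
                   \<le> 2 * lam * (- eta * (\<mu> * (norm (y - z))\<^sup>2 + inner (H z) (y - z)))"
  proof -
    have "inner (G y) (z - y) \<le> - eta * (\<mu> * (norm (y - z))\<^sup>2 + inner (H z) (y - z))"
      unfolding G_def
      by (rule regularized_inner_VI_sol_le [OF monF smonH _ _ z])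
        (use X_sub \<Omega>_sub \<open>y \<in> X\<close> eta in auto)
    then show ?thesis
      by (rule mult_left_mono) (use lam in simp)
  qed
  moreover have "ireg_beta LF LH \<mu> lam eta * (norm (w - z))\<^sup>2
                   \<le> (1 - lam\<^sup>2 * L\<^sup>2) * (norm (w - y))\<^sup>2 + (2 * lam * eta * \<mu>) * (norm (y - z))\<^sup>2"
    unfolding ireg_beta_def L_def [symmetric]
  proof (rule harmonic_mean_square_le)
    show "0 < 1 - lam\<^sup>2 * L\<^sup>2"
      unfolding L_def
      by (rule ireg_contraction_factor_pos)
        (use lam eta lam_bd lipschitz_on_nonneg [OF lipF] lipschitz_on_nonneg [OF lipH] in auto)
    show "norm (w - z) \<le> norm (w - y) + norm (y - z)"
      using norm_triangle_ineq [of "w - y" "y - z"] by simp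
  qed (use \<open>lam > 0\<close> \<open>eta > 0\<close> \<open>\<mu> > 0\<close> in auto)
  ultimately show ?thesis
    by (simp add: algebra_simps)
qed

lemma inertial_weighted_sum_bound:
  fixes a P q d c :: "nat \<Rightarrow> real"
  assumes a: "\<And>j. 0 \<le> a j" "\<And>j. a j \<le> D" and P: "\<And>j. 0 \<le> P j" "P 0 = 1"
    and q: "\<And>j. q (Suc j) \<le> q j" "q 0 \<le> 1" "\<And>j. 0 \<le> q j"
    and step: "\<And>j. P (Suc j) * a (Suc j) \<le> P j * a j + q j * (a j - a (j - 1)) + P j * d j - 2 * c j"
  shows "2 * (\<Sum>j<K. c j) \<le> D + (\<Sum>j<K. P j * d j)"
proof -
  have invariant: "P K * a K + 2 * (\<Sum>j<K. c j)
                     \<le> (\<Sum>j<K. P j * d j) + q (K - 1) * a (K - 1) + (1 - q (K - 1)) * D" for K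
  proof (induction K)
    case 0
    have "(1 - q 0) * a 0 \<le> (1 - q 0) * D"
      using q(2) a(2) by (simp add: mult_left_mono)
    then show ?case
      using P(2) by (simp add: algebra_simps)
  next
    case (Suc K)
    have "q K \<le> q (K - 1)"
      using q(1) by (cases K) auto
    then have "(q (K - 1) - q K) * a (K - 1) \<le> (q (K - 1) - q K) * D"
      using a(2) by (simp add: mult_left_mono)
    then show ?case
      using Suc.IH step [of K] by (simp add: algebra_simps)
  qed
  have "0 \<le> P K * a K"
    using P(1) a(1) by simp
  moreover have "q (K - 1) * a (K - 1) \<le> q (K - 1) * D"
    using q(3) a(2) by (simp add: mult_left_mono)
  ultimately show ?thesis
    using invariant [of K] by (simp add: algebra_simps)
qed

lemma Gap_weighted_average_le:
  fixes y :: "'i \<Rightarrow> 'a::real_inner"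
  assumes "Q \<noteq> {}" and pos: "(\<Sum>j\<in>A. c j) > 0"
    and bound: "\<And>z. z \<in> Q \<Longrightarrow> (\<Sum>j\<in>A. c j * inner (H z) (y j - z)) \<le> R"
  shows "Gap (inverse (\<Sum>j\<in>A. c j) *\<^sub>R (\<Sum>j\<in>A. c j *\<^sub>R y j)) H Q \<le> inverse (\<Sum>j\<in>A. c j) * R"
  unfolding Gap_def
proof (rule cSUP_least [OF \<open>Q \<noteq> {}\<close>])
  fix z assume "z \<in> Q"
  let ?\<Lambda> = "\<Sum>j\<in>A. c j"
  have "inverse ?\<Lambda> *\<^sub>R (\<Sum>j\<in>A. c j *\<^sub>R y j) - z = inverse ?\<Lambda> *\<^sub>R (\<Sum>j\<in>A. c j *\<^sub>R (y j - z))"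
    using pos by (simp add: scaleR_diff_right sum_subtractf scaleR_sum_left [symmetric])
  then have "inner (H z) (inverse ?\<Lambda> *\<^sub>R (\<Sum>j\<in>A. c j *\<^sub>R y j) - z)
               = inverse ?\<Lambda> * (\<Sum>j\<in>A. c j * inner (H z) (y j - z))"
    by (simp add: inner_sum_right)
  also have "\<dots> \<le> inverse ?\<Lambda> * R"
    using bound [OF \<open>z \<in> Q\<close>] pos by (simp add: mult_left_mono)
  finally show "inner (H z) (inverse ?\<Lambda> *\<^sub>R (\<Sum>j\<in>A. c j *\<^sub>R y j) - z) \<le> inverse ?\<Lambda> * R" .
qed

lemma Gap_ge_neg_infdist:
  fixes H :: "'a::real_inner \<Rightarrow> 'a"
  assumes "Q \<noteq> {}" "bounded Q" "bounded (H ` Q)"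
  shows "- (SUP z\<in>Q. norm (H z)) * infdist v Q \<le> Gap v H Q"
proof -
  define BH where "BH = (SUP z\<in>Q. norm (H z))"
  obtain M where M: "\<And>z. z \<in> Q \<Longrightarrow> norm (H z) \<le> M"
    using \<open>bounded (H ` Q)\<close> by (auto simp: bounded_iff)
  obtain B where B: "\<And>z. z \<in> Q \<Longrightarrow> norm z \<le> B"
    using \<open>bounded Q\<close> by (auto simp: bounded_iff)
  have norm_le_BH: "norm (H z) \<le> BH" if "z \<in> Q" for z
    unfolding BH_def using that M by (intro cSUP_upper bdd_aboveI2) auto
  have "bdd_above ((\<lambda>z. inner (H z) (v - z)) ` Q)"
  proof (rule bdd_aboveI2)
    fix z assume "z \<in> Q"
    have "inner (H z) (v - z) \<le> norm (H z) * norm (v - z)"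
      by (rule norm_cauchy_schwarz)
    also have "\<dots> \<le> M * (norm v + B)"
      using M [OF \<open>z \<in> Q\<close>] B [OF \<open>z \<in> Q\<close>] norm_triangle_ineq4 [of v z]
      by (intro mult_mono) (auto intro: order_trans [OF norm_ge_zero])
    finally show "inner (H z) (v - z) \<le> M * (norm v + B)" .
  qed
  then have dist_bound: "- BH * dist v z \<le> Gap v H Q" if "z \<in> Q" for z
  proof -
    have "- BH * dist v z \<le> - (norm (H z) * norm (v - z))"
      using norm_le_BH [OF that] by (simp add: dist_norm mult_right_mono)
    also have "\<dots> \<le> inner (H z) (v - z)"
      using norm_cauchy_schwarz [of "- H z" "v - z"] by simp
    also have "\<dots> \<le> Gap v H Q"
      unfolding Gap_def using that \<open>bdd_above _\<close> by (rule cSUP_upper)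
    finally show ?thesis .
  qed
  have "0 \<le> BH"
    using norm_le_BH \<open>Q \<noteq> {}\<close> norm_ge_zero order_trans by blast
  then consider "BH = 0" | "BH > 0"
    by linarith
  then show ?thesis
  proof cases
    case 1
    then show ?thesis
      using dist_bound \<open>Q \<noteq> {}\<close> by (auto simp: BH_def)
  next
    case 2
    have "- Gap v H Q / BH \<le> infdist v Q"
      unfolding infdist_notempty [OF \<open>Q \<noteq> {}\<close>]
    proof (rule cINF_greatest [OF \<open>Q \<noteq> {}\<close>])
      fix z assume "z \<in> Q"
      then have "- Gap v H Q \<le> dist v z * BH"
        using dist_bound [of z] by (simp add: algebra_simps)
      then show "- Gap v H Q / BH \<le> dist v z"
        using 2 by (metis minus_divide_left pos_divide_le_eq)
    qed
    then have "- Gap v H Q \<le> infdist v Q * BH"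
      using 2 by (metis minus_divide_left pos_divide_le_eq)
    then show ?thesis
      by (simp add: BH_def [symmetric] algebra_simps)
  qed
qed

locale ineireg =
  fixes F H :: "'a::euclidean_space \<Rightarrow> 'a" and DomF DomH X \<Omega> :: "'a set"
    and LF LH \<mu> :: real and x y w w' :: "nat \<Rightarrow> 'a" and alpha lam eta :: "nat \<Rightarrow> real"
  assumes monF: "monotone_op DomF F" and lipF: "lipschitz_on LF DomF F"
    and smonH: "strongly_monotone_op \<mu> DomH H" and lipH: "lipschitz_on LH DomH H"
    and mu_pos: "\<mu> > 0"
    and X_cpt: "compact X" and X_cvx: "convex X" and Om_closed: "closed \<Omega>" and Om_cvx: "convex \<Omega>"
    and X_sub: "X \<subseteq> \<Omega>" and Om_sub: "\<Omega> \<subseteq> DomF \<inter> DomH"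
    and x0: "x 0 \<in> X"
    and alpha_nonneg: "\<And>k. alpha k \<ge> 0" and lam_pos: "\<And>k. lam k > 0" and eta_pos: "\<And>k. eta k > 0"
    and w_def: "\<And>k. w k = x k + alpha k *\<^sub>R (x k - x (k - 1))"
    and w'_def: "\<And>k. w' k = closest_point \<Omega> (w k)"
    and y_def: "\<And>k. y k = closest_point X (w k - lam k *\<^sub>R (F (w' k) + eta k *\<^sub>R H (w' k)))"
    and x_step: "\<And>k. x (Suc k) = closest_point X (w k - lam k *\<^sub>R (F (y k) + eta k *\<^sub>R H (y k)))"
    and lam_bd: "\<And>k. lam k < 1 / (LF + eta k * LH)"
    and alpha0: "alpha 0 \<le> 1"
    and alpha_dec: "\<And>k. alpha (Suc k) \<le> (1 - ireg_beta LF LH \<mu> (lam k) (eta k)) * alpha k"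
begin

abbreviation beta :: "nat \<Rightarrow> real"
  where "beta i \<equiv> ireg_beta LF LH \<mu> (lam i) (eta i)"

text \<open>\<open>P j\<close> is the paper's \<open>p\<^sub>j\<^sub>-\<^sub>1\<close>, so that \<open>P 0 = 1\<close> and \<open>p\<^sub>j = P (Suc j)\<close>.\<close>
definition P :: "nat \<Rightarrow> real"
  where "P j = inverse (\<Prod>i<j. 1 - beta i)"

abbreviation delta :: "nat \<Rightarrow> real"
  where "delta j \<equiv> alpha j * (1 + alpha j) * (norm (x j - x (j - 1)))\<^sup>2"

lemma beta_bounds: "0 < beta j" "beta j < 1"
  using ireg_beta_bounds [OF lam_pos eta_pos mu_pos lipschitz_on_nonneg [OF lipF]
      lipschitz_on_nonneg [OF lipH] lam_bd] by auto

lemma P_0 [simp]: "P 0 = 1"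
  by (simp add: P_def)

lemma P_pos: "0 < P j"
  using beta_bounds by (simp add: P_def prod_pos)

lemma P_Suc: "P (Suc j) * (1 - beta j) = P j"
proof -
  have "1 - beta j \<noteq> 0"
    using beta_bounds [of j] by simp
  then show ?thesis
    by (simp add: P_def inverse_mult_distrib mult.assoc)
qed

lemma x_in_X: "x j \<in> X"
  using x0 closest_point_in_set [OF compact_imp_closed [OF X_cpt]] by (cases j) (auto simp: x_step)

lemma step_descent:
  assumes "z \<in> VI_sol F X"
  shows "(norm (x (Suc j) - z))\<^sup>2
           \<le> (1 - beta j) * (norm (w j - z))\<^sup>2 - 2 * lam j * eta j * inner (H z) (y j - z)"
  by (rule ineireg_step_descent [OF monF lipF smonH lipH mu_pos X_cvx compact_imp_closed [OF X_cpt]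
        Om_cvx Om_closed X_sub Om_sub assms lam_pos eta_pos lam_bd w'_def y_def x_step])

lemma weighted_step_descent:
  assumes z: "z \<in> VI_sol F X"
  defines "a \<equiv> \<lambda>j. (norm (x j - z))\<^sup>2"
  shows "P (Suc j) * a (Suc j)
           \<le> P j * a j + P j * alpha j * (a j - a (j - 1)) + P j * delta j
              - 2 * (lam j * eta j * P (Suc j) * inner (H z) (y j - z))"
proof -
  have "P (Suc j) * a (Suc j)
          \<le> P (Suc j) * ((1 - beta j) * (norm (w j - z))\<^sup>2 - 2 * lam j * eta j * inner (H z) (y j - z))"
    unfolding a_def using step_descent [OF z] less_imp_le [OF P_pos] by (rule mult_left_mono)
  also have "\<dots> = P (Suc j) * (1 - beta j) * (norm (w j - z))\<^sup>2
                    - 2 * (lam j * eta j * P (Suc j) * inner (H z) (y j - z))"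
    by (simp add: algebra_simps)
  also have "\<dots> = P j * (norm (w j - z))\<^sup>2 - 2 * (lam j * eta j * P (Suc j) * inner (H z) (y j - z))"
    by (simp only: P_Suc)
  also have "(norm (w j - z))\<^sup>2 = (1 + alpha j) * a j - alpha j * a (j - 1) + delta j"
    unfolding w_def a_def by (rule norm_extrapolation_diff_sq)
  finally show ?thesis
    by (simp add: algebra_simps)
qed

lemma weighted_gap_sum_bound:
  assumes z: "z \<in> VI_sol F X"
  shows "(\<Sum>j<K. lam j * eta j * P (Suc j) * inner (H z) (y j - z))
           \<le> ((diameter X)\<^sup>2 + (\<Sum>j<K. P j * delta j)) / 2"
proof -
  have "z \<in> X"
    using z by (simp add: VI_sol_def)
  have "2 * (\<Sum>j<K. lam j * eta j * P (Suc j) * inner (H z) (y j - z))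
          \<le> (diameter X)\<^sup>2 + (\<Sum>j<K. P j * delta j)"
  proof (rule inertial_weighted_sum_bound [where q = "\<lambda>j. P j * alpha j",
        OF _ _ _ _ _ _ _ weighted_step_descent [OF z]])
    fix j
    show "(norm (x j - z))\<^sup>2 \<le> (diameter X)\<^sup>2"
      using diameter_bounded_bound [OF compact_imp_bounded [OF X_cpt] x_in_X \<open>z \<in> X\<close>]
      by (simp add: dist_norm power_mono)
    have "P (Suc j) * alpha (Suc j) \<le> P (Suc j) * ((1 - beta j) * alpha j)"
      using alpha_dec less_imp_le [OF P_pos] by (rule mult_left_mono)
    then show "P (Suc j) * alpha (Suc j) \<le> P j * alpha j"
      by (metis P_Suc mult.assoc)
  qed (use less_imp_le [OF P_pos] alpha_nonneg alpha0 in auto)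
  then show ?thesis
    by simp
qed

lemma bounded_VI_sol: "bounded (VI_sol F X)" "bounded (H ` VI_sol F X)"
proof -
  have "VI_sol F X \<subseteq> X"
    by (auto simp: VI_sol_def)
  moreover have "compact (H ` X)"
    using X_cpt X_sub Om_sub lipschitz_on_continuous_on [OF lipH]
    by (intro compact_continuous_image) (auto intro: continuous_on_subset)
  ultimately show "bounded (VI_sol F X)" "bounded (H ` VI_sol F X)"
    using compact_imp_bounded X_cpt bounded_subset image_mono by metis+
qed

end

theorem proposition4p6:
  fixes F H :: "'a::euclidean_space \<Rightarrow> 'a"
    and DomF DomH X \<Omega> :: "'a set"
    and LF LH \<mu> :: real
    and x y w w' :: "nat \<Rightarrow> 'a"
    and alpha lam eta :: "nat \<Rightarrow> real"
    and k :: nat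
  assumes monF: "monotone_op DomF F" and lipF: "lipschitz_on LF DomF F" and LF_pos: "LF > 0"
    and monH: "monotone_op DomH H" and lipH: "lipschitz_on LH DomH H" and LH_pos: "LH > 0"
    and mu_pos: "\<mu> > 0" and smonH: "strongly_monotone_op \<mu> DomH H"
    and X_ne: "X \<noteq> {}" and X_cpt: "compact X" and X_cvx: "convex X"
    and Om_ne: "\<Omega> \<noteq> {}" and Om_closed: "closed \<Omega>" and Om_cvx: "convex \<Omega>"
    and X_sub: "X \<subseteq> \<Omega>" and Om_sub: "\<Omega> \<subseteq> DomF \<inter> DomH"
    and Q_ne: "VI_sol F X \<noteq> {}"
    and x0: "x 0 \<in> X"
    and alpha_nn: "\<And>k. alpha k \<ge> 0" and lam_pos: "\<And>k. lam k > 0" and eta_pos: "\<And>k. eta k > 0"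
    and w_def: "\<And>k. w k = x k + alpha k *\<^sub>R (x k - x (k - 1))"
    and w'_def: "\<And>k. w' k = closest_point \<Omega> (w k)"
    and y_def: "\<And>k. y k = closest_point X (w k - lam k *\<^sub>R (F (w' k) + eta k *\<^sub>R H (w' k)))"
    and x_step: "\<And>k. x (Suc k) = closest_point X (w k - lam k *\<^sub>R (F (y k) + eta k *\<^sub>R H (y k)))"
    and lam_bd: "\<And>k. lam k < 1 / (LF + eta k * LH)"
    and alpha0: "alpha 0 \<le> 1"
    and alpha_dec: "\<And>k. alpha (Suc k) \<le> (1 - ireg_beta LF LH \<mu> (lam k) (eta k)) * alpha k"
    and k_pos: "k \<ge> 1"
  shows
   "let Q = VI_sol F X;
        beta = (%i. ireg_beta LF LH \<mu> (lam i) (eta i));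
        pm = (%j. inverse (\<Prod>i<j. 1 - beta i));
        p = (%j. pm (Suc j));
        delta = (%j. alpha j * (1 + alpha j) * (norm (x j - x (j - 1)))\<^sup>2);
        Lam = (\<Sum>j<k. lam j * eta j * p j);
        ybar = inverse Lam *\<^sub>R (\<Sum>j<k. (lam j * eta j * p j) *\<^sub>R y j);
        BH = (SUP z\<in>Q. norm (H z))
    in - BH * infdist ybar Q \<le> Gap ybar H Q
       \<and> Gap ybar H Q \<le> inverse Lam * (((diameter X)\<^sup>2 + (\<Sum>j<k. pm j * delta j)) / 2)"
proof -
  interpret ireg: ineireg F H DomF DomH X \<Omega> LF LH \<mu> x y w w' alpha lam eta
    by unfold_locales (fact assms)+
  define c where "c j = lam j * eta j * ireg.P (Suc j)" for j
  have "0 < (\<Sum>j<k. c j)"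
    unfolding c_def using k_pos lam_pos eta_pos ireg.P_pos
    by (intro sum_pos) (auto simp: lessThan_empty_iff)
  then have upper: "Gap (inverse (\<Sum>j<k. c j) *\<^sub>R (\<Sum>j<k. c j *\<^sub>R y j)) H (VI_sol F X)
      \<le> inverse (\<Sum>j<k. c j) * (((diameter X)\<^sup>2 + (\<Sum>j<k. ireg.P j * ireg.delta j)) / 2)"
    using Q_ne ireg.weighted_gap_sum_bound by (intro Gap_weighted_average_le) (auto simp: c_def)
  have lower: "- (SUP z\<in>VI_sol F X. norm (H z)) * infdist v (VI_sol F X) \<le> Gap v H (VI_sol F X)" for v
    by (rule Gap_ge_neg_infdist [OF Q_ne ireg.bounded_VI_sol])
  show ?thesis
    unfolding Let_def ireg.P_def [symmetric] using lower upper by (simp add: c_def)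
qed

end
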